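(* For any simple undirected graph $G$, the number of subgraphs isomorphic to the paw graph is $$n_G(\text{paw})=\sum_{\{st,uv\}\in Q}(a_{su}+a_{tv})(a_{sv}+a_{tu}).$$
   Context: $a_{ij}$ are adjacency matrix entries. $Q$ is the set of unordered pairs $\{st,uv\}$ of edges with $s,t,u,v$ pairwise distinct. The paw graph is a triangle with one pendant edge attached to one of its vertices (4 vertices, 4 edges). $n_G(F)$ counts (not necessarily induced) subgraphs isomorphic to $F$. *)

theory Defs
  imports Main
begin

definition simple_graph :: "'a set \<Rightarrow> 'a set set \<Rightarrow> bool" where
  "simple_graph V E \<longleftrightarrow> finite V \<and>
     E \<subseteq> {{u, v} | u v. u \<in> V \<and> v \<in> V \<and> u \<noteq> v}"

definition adj :: "'a set set \<Rightarrow> 'a \<Rightarrow> 'a \<Rightarrow> nat" where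
  "adj E u v = (if {u, v} \<in> E then 1 else 0)"

definition Qpairs :: "'a set set \<Rightarrow> 'a set set set" where
  "Qpairs E = {{{s, t}, {u, v}} | s t u v.
      {s, t} \<in> E \<and> {u, v} \<in> E \<and> distinct [s, t, u, v]}"

text \<open>The summand (a_su + a_tv)(a_sv + a_tu) for q = {st, uv}; it does not
  depend on the chosen labelling of q.\<close>
definition paw_term :: "'a set set \<Rightarrow> 'a set set \<Rightarrow> nat" where
  "paw_term E q = (SOME r. \<exists>s t u v. q = {{s, t}, {u, v}} \<and> distinct [s, t, u, v] \<and>
      r = (adj E s u + adj E t v) * (adj E s v + adj E t u))"

definition paw_V :: "nat set" where "paw_V = {0, 1, 2, 3}"
definition paw_E :: "nat set set" where
  "paw_E = {{0, 1}, {1, 2}, {0, 2}, {2, 3}}"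

definition is_subgraph :: "'a set \<Rightarrow> 'a set set \<Rightarrow> 'a set \<Rightarrow> 'a set set \<Rightarrow> bool" where
  "is_subgraph W F V E \<longleftrightarrow> W \<subseteq> V \<and> F \<subseteq> E \<and> (\<forall>e\<in>F. e \<subseteq> W)"

definition iso_paw :: "'a set \<Rightarrow> 'a set set \<Rightarrow> bool" where
  "iso_paw W F \<longleftrightarrow> (\<exists>f. bij_betw f paw_V W \<and>
     (\<forall>x\<in>paw_V. \<forall>y\<in>paw_V. {x, y} \<in> paw_E \<longleftrightarrow> {f x, f y} \<in> F))"

text \<open>n_G(paw): number of (not necessarily induced) subgraphs of G isomorphic to paw.\<close>
definition n_paw :: "'a set \<Rightarrow> 'a set set \<Rightarrow> nat" where
  "n_paw V E = card {(W, F). is_subgraph W F V E \<and> iso_paw W F}"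

end

theory Submission
  imports Defs
begin

text \<open>A copy of the paw in G is determined by its edge set. Exactly two of its edges are
  disjoint from another edge, namely the pendant edge and the opposite triangle edge, and they
  form a pair {st, uv} in Q. Conversely, the copies with a given such pair arise by adding one
  edge of {su, tv} and one edge of {sv, tu}, both present in G, and there are
  (a_su + a_tv)(a_sv + a_tu) ways to do so. Summing over the fibres gives the formula.\<close>

lemma simple_graph_edge:
  assumes "simple_graph V E" "e \<in> E"
  shows "\<exists>x y. x \<in> V \<and> y \<in> V \<and> x \<noteq> y \<and> e = {x, y}"
  using assms unfolding simple_graph_def by blast

lemma simple_graph_edge_subset: "simple_graph V E \<Longrightarrow> e \<in> E \<Longrightarrow> e \<subseteq> V"
  using simple_graph_edge by blast

lemma simple_graph_finite_edges: "simple_graph V E \<Longrightarrow> finite E"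
  using simple_graph_edge_subset finite_subset[of E "Pow V"] unfolding simple_graph_def by blast

lemma finite_Qpairs: "simple_graph V E \<Longrightarrow> finite (Qpairs E)"
  using finite_subset[of "Qpairs E" "Pow E"] simple_graph_finite_edges unfolding Qpairs_def by auto

lemma adj_commute: "adj E u v = adj E v u"
  by (simp add: adj_def insert_commute)

lemma paw_term_eq:
  assumes stuv: "distinct [s, t, u, v]"
  shows "paw_term E {{s, t}, {u, v}} = (adj E s u + adj E t v) * (adj E s v + adj E t u)"
  unfolding paw_term_def
proof (rule someI2)
  show "\<exists>s' t' u' v'. {{s, t}, {u, v}} = {{s', t'}, {u', v'}} \<and> distinct [s', t', u', v'] \<and>
      (adj E s u + adj E t v) * (adj E s v + adj E t u) = (adj E s' u' + adj E t' v') * (adj E s' v' + adj E t' u')"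
    using stuv by blast
next
  fix r assume "\<exists>s' t' u' v'. {{s, t}, {u, v}} = {{s', t'}, {u', v'}} \<and> distinct [s', t', u', v'] \<and>
      r = (adj E s' u' + adj E t' v') * (adj E s' v' + adj E t' u')"
  then obtain s' t' u' v' where "{{s, t}, {u, v}} = {{s', t'}, {u', v'}}"
    and r: "r = (adj E s' u' + adj E t' v') * (adj E s' v' + adj E t' u')"
    by blast
  with stuv show "r = (adj E s u + adj E t v) * (adj E s v + adj E t u)"
    by (auto simp: doubleton_eq_iff adj_commute algebra_simps)
qed

definition paw_edges :: "'a \<Rightarrow> 'a \<Rightarrow> 'a \<Rightarrow> 'a \<Rightarrow> 'a set set" where
  "paw_edges a b c d = {{a, b}, {b, c}, {a, c}, {c, d}}"

lemma paw_edges_eq_image: "paw_edges (f 0) (f 1) (f 2) (f 3) = (`) f ` paw_E"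
  by (simp add: paw_edges_def paw_E_def)

lemma paw_E_subset_Pow: "paw_E \<subseteq> Pow paw_V"
  by (auto simp: paw_E_def paw_V_def)

lemma iso_paw_iff_image:
  assumes edges: "\<forall>e\<in>F. \<exists>x\<in>W. \<exists>y\<in>W. e = {x, y}"
  shows "iso_paw W F \<longleftrightarrow> (\<exists>f. bij_betw f paw_V W \<and> F = (`) f ` paw_E)"
proof
  assume "iso_paw W F"
  then obtain f where bij: "bij_betw f paw_V W"
    and iso: "\<forall>x\<in>paw_V. \<forall>y\<in>paw_V. {x, y} \<in> paw_E \<longleftrightarrow> {f x, f y} \<in> F"
    unfolding iso_paw_def by blast
  have "F \<subseteq> (`) f ` paw_E"
  proof
    fix e assume "e \<in> F"
    then obtain i j where ij: "i \<in> paw_V" "j \<in> paw_V" "e = {f i, f j}"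
      using edges bij by (metis bij_betw_imp_surj_on imageE)
    then have "{i, j} \<in> paw_E" using iso \<open>e \<in> F\<close> by blast
    moreover have "e = f ` {i, j}" using ij by simp
    ultimately show "e \<in> (`) f ` paw_E" by blast
  qed
  moreover have "(`) f ` paw_E \<subseteq> F"
  proof
    fix e assume "e \<in> (`) f ` paw_E"
    then obtain x y where "{x, y} \<in> paw_E" "e = {f x, f y}"
      by (auto simp: paw_E_def)
    then show "e \<in> F"
      using iso paw_E_subset_Pow by blast
  qed
  ultimately show "\<exists>f. bij_betw f paw_V W \<and> F = (`) f ` paw_E"
    using bij by blast
next
  assume "\<exists>f. bij_betw f paw_V W \<and> F = (`) f ` paw_E"
  then obtain f where bij: "bij_betw f paw_V W" and F: "F = (`) f ` paw_E" by blast
  have "inj_on ((`) f) (Pow paw_V)"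
    using bij by (auto intro: inj_on_image simp: bij_betw_def)
  then have "{x, y} \<in> paw_E \<longleftrightarrow> {f x, f y} \<in> F" if "x \<in> paw_V" "y \<in> paw_V" for x y
    using inj_on_image_mem_iff[of "(`) f" "Pow paw_V" "{x, y}" paw_E] paw_E_subset_Pow that F
    by simp
  then show "iso_paw W F"
    unfolding iso_paw_def using bij by blast
qed

definition paw_copies :: "'a set \<Rightarrow> 'a set set \<Rightarrow> ('a set \<times> 'a set set) set" where
  "paw_copies V E = {(W, F). is_subgraph W F V E \<and> iso_paw W F}"

lemma mem_paw_copies_iff:
  assumes G: "simple_graph V E"
  shows "(W, F) \<in> paw_copies V E \<longleftrightarrow>
    (\<exists>a b c d. distinct [a, b, c, d] \<and> W = {a, b, c, d} \<and> F = paw_edges a b c d \<and> F \<subseteq> E)"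
  unfolding paw_copies_def mem_Collect_eq case_prod_conv
proof
  assume copy: "is_subgraph W F V E \<and> iso_paw W F"
  then have FE: "F \<subseteq> E" and "\<forall>e\<in>F. e \<subseteq> W"
    unfolding is_subgraph_def by auto
  have "\<exists>x\<in>W. \<exists>y\<in>W. e = {x, y}" if e: "e \<in> F" for e
  proof -
    obtain x y where "e = {x, y}"
      using simple_graph_edge[OF G] FE e by blast
    moreover have "e \<subseteq> W"
      using \<open>\<forall>e\<in>F. e \<subseteq> W\<close> e by blast
    ultimately show ?thesis
      by blast
  qed
  then have "\<exists>f. bij_betw f paw_V W \<and> F = (`) f ` paw_E"
    using copy by (simp add: iso_paw_iff_image)
  then obtain f where bij: "bij_betw f paw_V W" and F: "F = (`) f ` paw_E"
    by blast
  have "inj_on f {0, 1, 2, 3}"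
    using bij unfolding paw_V_def by (rule bij_betw_imp_inj_on)
  then have "distinct [f 0, f 1, f 2, f 3]"
    by (simp add: inj_on_eq_iff)
  moreover have "W = {f 0, f 1, f 2, f 3}"
    using bij_betw_imp_surj_on[OF bij] unfolding paw_V_def by simp
  moreover have "F = paw_edges (f 0) (f 1) (f 2) (f 3)"
    using F paw_edges_eq_image by metis
  ultimately show "\<exists>a b c d. distinct [a, b, c, d] \<and> W = {a, b, c, d} \<and> F = paw_edges a b c d \<and> F \<subseteq> E"
    using FE by blast
next
  assume "\<exists>a b c d. distinct [a, b, c, d] \<and> W = {a, b, c, d} \<and> F = paw_edges a b c d \<and> F \<subseteq> E"
  then obtain a b c d where abcd: "distinct [a, b, c, d]" and W: "W = {a, b, c, d}"
    and F: "F = paw_edges a b c d" and FE: "F \<subseteq> E" by blast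
  have "{a, b} \<in> E" "{c, d} \<in> E"
    using F FE by (auto simp: paw_edges_def)
  then have "W \<subseteq> V"
    unfolding W using simple_graph_edge_subset[OF G] by auto
  then have "is_subgraph W F V E"
    using FE unfolding is_subgraph_def W F paw_edges_def by simp
  moreover have "bij_betw ((!) [a, b, c, d]) paw_V W"
    by (rule bij_betw_nth) (use abcd W in \<open>auto simp: paw_V_def\<close>)
  moreover have "F = (`) ((!) [a, b, c, d]) ` paw_E"
    using paw_edges_eq_image[of "(!) [a, b, c, d]"] F by simp
  moreover have "\<forall>e\<in>F. \<exists>x\<in>W. \<exists>y\<in>W. e = {x, y}"
    unfolding F W paw_edges_def by auto
  ultimately show "is_subgraph W F V E \<and> iso_paw W F"
    using iso_paw_iff_image by blast
qed

definition disjoint_edges :: "'a set set \<Rightarrow> 'a set set" where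
  "disjoint_edges F = {e \<in> F. \<exists>e'\<in>F. e \<inter> e' = {}}"

lemma disjoint_edges_paw_edges:
  "distinct [a, b, c, d] \<Longrightarrow> disjoint_edges (paw_edges a b c d) = {{a, b}, {c, d}}"
  unfolding disjoint_edges_def paw_edges_def by auto

lemma paw_edges_with_disjoint_pair_iff:
  assumes "distinct [s, t, u, v]"
  shows "(\<exists>a b c d. distinct [a, b, c, d] \<and> {{a, b}, {c, d}} = {{s, t}, {u, v}} \<and> F = paw_edges a b c d)
    \<longleftrightarrow> (\<exists>e1\<in>{{s, u}, {t, v}}. \<exists>e2\<in>{{s, v}, {t, u}}. F = {{s, t}, {u, v}, e1, e2})"
proof
  assume "\<exists>a b c d. distinct [a, b, c, d] \<and> {{a, b}, {c, d}} = {{s, t}, {u, v}} \<and> F = paw_edges a b c d"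
  then obtain a b c d where "distinct [a, b, c, d]" "{{a, b}, {c, d}} = {{s, t}, {u, v}}"
    and F: "F = paw_edges a b c d" by blast
  then have "({a, b} = {s, t} \<and> {c, d} = {u, v}) \<or> ({a, b} = {u, v} \<and> {c, d} = {s, t})"
    by (simp add: doubleton_eq_iff)
  then show "\<exists>e1\<in>{{s, u}, {t, v}}. \<exists>e2\<in>{{s, v}, {t, u}}. F = {{s, t}, {u, v}, e1, e2}"
    unfolding F paw_edges_def doubleton_eq_iff by (elim disjE conjE; simp add: insert_commute)
next
  assume "\<exists>e1\<in>{{s, u}, {t, v}}. \<exists>e2\<in>{{s, v}, {t, u}}. F = {{s, t}, {u, v}, e1, e2}"
  then obtain e1 e2 where e1: "e1 = {s, u} \<or> e1 = {t, v}" and e2: "e2 = {s, v} \<or> e2 = {t, u}"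
    and F: "F = {{s, t}, {u, v}, e1, e2}" by blast
  have witness: "\<exists>a b c d. distinct [a, b, c, d] \<and> {{a, b}, {c, d}} = {{s, t}, {u, v}} \<and> F = paw_edges a b c d"
    if "distinct [a, b, c, d]" "{{a, b}, {c, d}} = {{s, t}, {u, v}}" "F = paw_edges a b c d" for a b c d
    using that by blast
  from e1 e2 show "\<exists>a b c d. distinct [a, b, c, d] \<and> {{a, b}, {c, d}} = {{s, t}, {u, v}} \<and> F = paw_edges a b c d"
  proof (elim disjE)
    assume "e1 = {s, u}" "e2 = {s, v}"
    then show ?thesis
      by (intro witness[of u v s t]) (use assms F in \<open>auto simp: paw_edges_def insert_commute\<close>)
  next
    assume "e1 = {s, u}" "e2 = {t, u}"
    then show ?thesis
      by (intro witness[of s t u v]) (use assms F in \<open>auto simp: paw_edges_def insert_commute\<close>)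
  next
    assume "e1 = {t, v}" "e2 = {s, v}"
    then show ?thesis
      by (intro witness[of s t v u]) (use assms F in \<open>auto simp: paw_edges_def insert_commute\<close>)
  next
    assume "e1 = {t, v}" "e2 = {t, u}"
    then show ?thesis
      by (intro witness[of u v t s]) (use assms F in \<open>auto simp: paw_edges_def insert_commute\<close>)
  qed
qed

lemma vertices_eq_if_edge_pairs_eq:
  "{{a, b}, {c, d}} = {{s, t}, {u, v}} \<Longrightarrow> {a, b, c, d} = {s, t, u, v}"
  by (drule arg_cong[of _ _ Union]) auto

lemma paw_copies_fibre:
  assumes G: "simple_graph V E" and stuv: "distinct [s, t, u, v]"
    and st: "{s, t} \<in> E" and uv: "{u, v} \<in> E"
  shows "{p \<in> paw_copies V E. disjoint_edges (snd p) = {{s, t}, {u, v}}} =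
    (\<lambda>(e1, e2). ({s, t, u, v}, {{s, t}, {u, v}, e1, e2})) ` (({{s, u}, {t, v}} \<inter> E) \<times> ({{s, v}, {t, u}} \<inter> E))"
    (is "?fibre = ?h ` (?A \<times> ?B)")
proof (intro equalityI subsetI)
  fix p assume "p \<in> ?fibre"
  then obtain W F where p: "p = (W, F)" and copy: "(W, F) \<in> paw_copies V E"
    and disj: "disjoint_edges F = {{s, t}, {u, v}}"
    by (cases p) auto
  from copy obtain a b c d where abcd: "distinct [a, b, c, d]"
    and W: "W = {a, b, c, d}" and F: "F = paw_edges a b c d" and FE: "F \<subseteq> E"
    unfolding mem_paw_copies_iff[OF G] by blast
  have pairs: "{{a, b}, {c, d}} = {{s, t}, {u, v}}"
    using disj disjoint_edges_paw_edges[OF abcd] F by simp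
  then have "\<exists>e1\<in>{{s, u}, {t, v}}. \<exists>e2\<in>{{s, v}, {t, u}}. F = {{s, t}, {u, v}, e1, e2}"
    unfolding paw_edges_with_disjoint_pair_iff[OF stuv, symmetric] using abcd F by blast
  then obtain e1 e2 where "e1 \<in> {{s, u}, {t, v}}" "e2 \<in> {{s, v}, {t, u}}"
    and F': "F = {{s, t}, {u, v}, e1, e2}" by blast
  moreover have "e1 \<in> E" "e2 \<in> E"
    using F' FE by auto
  moreover have "W = {s, t, u, v}"
    using W vertices_eq_if_edge_pairs_eq[OF pairs] by simp
  ultimately show "p \<in> ?h ` (?A \<times> ?B)"
    unfolding p by force
next
  fix p assume "p \<in> ?h ` (?A \<times> ?B)"
  then obtain x where x: "x \<in> ?A \<times> ?B" "p = ?h x"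
    by (rule imageE)
  obtain e1 e2 where "x = (e1, e2)"
    by (cases x)
  with x have e1: "e1 \<in> ?A" and e2: "e2 \<in> ?B" and p: "p = ({s, t, u, v}, {{s, t}, {u, v}, e1, e2})"
    by simp_all
  have "\<exists>e1'\<in>{{s, u}, {t, v}}. \<exists>e2'\<in>{{s, v}, {t, u}}. {{s, t}, {u, v}, e1, e2} = {{s, t}, {u, v}, e1', e2'}"
    by (rule bexI[of _ e1], rule bexI[of _ e2]) (use e1 e2 in auto)
  then have "\<exists>a b c d. distinct [a, b, c, d] \<and> {{a, b}, {c, d}} = {{s, t}, {u, v}} \<and>
      {{s, t}, {u, v}, e1, e2} = paw_edges a b c d"
    by (simp only: paw_edges_with_disjoint_pair_iff[OF stuv])
  then obtain a b c d where abcd: "distinct [a, b, c, d]" and pairs: "{{a, b}, {c, d}} = {{s, t}, {u, v}}"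
    and F: "{{s, t}, {u, v}, e1, e2} = paw_edges a b c d"
    by (elim exE conjE) (rule that)
  have "{{s, t}, {u, v}, e1, e2} \<subseteq> E"
    using st uv e1 e2 by blast
  then have "({s, t, u, v}, {{s, t}, {u, v}, e1, e2}) \<in> paw_copies V E"
    unfolding mem_paw_copies_iff[OF G]
    using abcd vertices_eq_if_edge_pairs_eq[OF pairs] F by blast
  moreover have "disjoint_edges {{s, t}, {u, v}, e1, e2} = {{s, t}, {u, v}}"
    using F disjoint_edges_paw_edges[OF abcd] pairs by simp
  ultimately show "p \<in> ?fibre"
    unfolding p by simp
qed

lemma card_doubleton_Int: "x \<noteq> y \<Longrightarrow> card ({x, y} \<inter> A) = of_bool (x \<in> A) + of_bool (y \<in> A)"
  by (cases "x \<in> A"; cases "y \<in> A") auto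

lemma adj_eq_of_bool: "adj E u v = of_bool ({u, v} \<in> E)"
  by (simp add: adj_def)

lemma card_paw_copies_fibre:
  assumes "simple_graph V E" and stuv: "distinct [s, t, u, v]"
    and "{s, t} \<in> E" and "{u, v} \<in> E"
  shows "card {p \<in> paw_copies V E. disjoint_edges (snd p) = {{s, t}, {u, v}}} =
    (adj E s u + adj E t v) * (adj E s v + adj E t u)"
proof -
  let ?A = "{{s, u}, {t, v}} \<inter> E" and ?B = "{{s, v}, {t, u}} \<inter> E"
  let ?h = "\<lambda>(e1, e2). ({s, t, u, v}, {{s, t}, {u, v}, e1, e2})"
  \<comment> \<open>the three perfect matchings of the complete graph on s, t, u, v\<close>
  have matchings_disjoint: "{{s, t}, {u, v}} \<inter> {{s, u}, {t, v}} = {}"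
      "{{s, t}, {u, v}} \<inter> {{s, v}, {t, u}} = {}" "{{s, u}, {t, v}} \<inter> {{s, v}, {t, u}} = {}"
    using stuv by (auto simp: doubleton_eq_iff)
  have "inj_on ?h (?A \<times> ?B)"
  proof (rule inj_onI)
    fix x y assume "x \<in> ?A \<times> ?B" "y \<in> ?A \<times> ?B" "?h x = ?h y"
    then obtain e1 e2 e1' e2' where x: "x = (e1, e2)" and y: "y = (e1', e2')"
      and in_A: "e1 \<in> ?A" "e1' \<in> ?A" and in_B: "e2 \<in> ?B" "e2' \<in> ?B"
      and F: "{{s, t}, {u, v}, e1, e2} = {{s, t}, {u, v}, e1', e2'}"
      by (cases x; cases y) auto
    have A: "e1 \<in> {{s, u}, {t, v}}" "e1' \<in> {{s, u}, {t, v}}"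
      and B: "e2 \<in> {{s, v}, {t, u}}" "e2' \<in> {{s, v}, {t, u}}"
      using in_A in_B by simp_all
    have "e1 \<in> {{s, t}, {u, v}, e1', e2'}" "e2 \<in> {{s, t}, {u, v}, e1', e2'}"
      using F by blast+
    moreover have "e1 \<notin> {{s, t}, {u, v}}" "e1 \<noteq> e2'" "e2 \<notin> {{s, t}, {u, v}}" "e2 \<noteq> e1'"
      using A B matchings_disjoint by blast+
    ultimately have "e1 = e1'" "e2 = e2'"
      by simp_all
    then show "x = y"
      using x y by simp
  qed
  moreover have "{s, u} \<noteq> {t, v}" "{s, v} \<noteq> {t, u}"
    using stuv by (simp_all add: doubleton_eq_iff)
  ultimately show ?thesis
    unfolding paw_copies_fibre[OF assms]
    by (simp add: card_image card_cartesian_product card_doubleton_Int adj_eq_of_bool insert_commute)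
qed

lemma disjoint_edges_paw_copy_in_Qpairs:
  assumes G: "simple_graph V E" and "p \<in> paw_copies V E"
  shows "disjoint_edges (snd p) \<in> Qpairs E"
proof -
  obtain W F where "p = (W, F)" and "(W, F) \<in> paw_copies V E"
    using assms(2) by (cases p) auto
  then obtain a b c d where abcd: "distinct [a, b, c, d]" and F: "snd p = paw_edges a b c d"
    and "paw_edges a b c d \<subseteq> E"
    unfolding mem_paw_copies_iff[OF G] by auto
  then have "{a, b} \<in> E" "{c, d} \<in> E"
    by (auto simp: paw_edges_def)
  then show ?thesis
    unfolding F disjoint_edges_paw_edges[OF abcd] Qpairs_def using abcd by blast
qed

lemma finite_paw_copies:
  assumes "simple_graph V E"
  shows "finite (paw_copies V E)"
proof (rule finite_subset)
  show "paw_copies V E \<subseteq> Pow V \<times> Pow E"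
    by (auto simp: paw_copies_def is_subgraph_def)
  show "finite (Pow V \<times> Pow E)"
    using assms simple_graph_finite_edges unfolding simple_graph_def by blast
qed

theorem proposition3:
  fixes V :: "'a set" and E :: "'a set set"
  assumes "simple_graph V E"
  shows "n_paw V E = (\<Sum>q\<in>Qpairs E. paw_term E q)"
proof -
  have "n_paw V E = card (paw_copies V E)"
    by (simp add: n_paw_def paw_copies_def)
  also have "\<dots> = (\<Sum>q\<in>Qpairs E. card {p \<in> paw_copies V E. disjoint_edges (snd p) = q})"
    unfolding card_eq_sum
    by (rule sum.group[symmetric])
      (use finite_paw_copies[OF assms] finite_Qpairs[OF assms] disjoint_edges_paw_copy_in_Qpairs[OF assms] in auto)
  also have "\<dots> = (\<Sum>q\<in>Qpairs E. paw_term E q)"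
  proof (rule sum.cong[OF refl])
    fix q assume "q \<in> Qpairs E"
    then obtain s t u v where q: "q = {{s, t}, {u, v}}" and st: "{s, t} \<in> E" and uv: "{u, v} \<in> E"
      and stuv: "distinct [s, t, u, v]"
      unfolding Qpairs_def by (elim CollectE exE conjE) (rule that)
    show "card {p \<in> paw_copies V E. disjoint_edges (snd p) = q} = paw_term E q"
      unfolding q card_paw_copies_fibre[OF assms stuv st uv] paw_term_eq[OF stuv] ..
  qed
  finally show ?thesis .
qed

end
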